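(* Let $a$ be a positive, locally integrable, monotonically increasing function on $\mathbb{R}_+$, and let $\hat a(x):=x/a(x)$, $x\in\mathbb{R}_+$. Assume that $\hat a$ is also monotonically increasing on $\mathbb{R}_+$. Let $q\in L^1(\mathbb{R}_+)$ be complex-valued and let $e_+(x,z)$ be its Jost solution. Then for all $x\in\mathbb{R}_+$ and all $z\in\mathbb{C}_+^0:=\{z\in\mathbb{C}:\operatorname{Im}z\ge0,\ z\ne0\}$, $$|e^{-izx}e_+(x,z)-1|\le \exp\bigl(\omega_a(x,z)\bigr)-1,\qquad \omega_a(x,z):=\hat a\!\left(\frac1{|z|}\right)\int_x^\infty a(t)|q(t)|\,dt$$ (the right-hand side being possibly $+\infty$).
   Context: For a complex-valued $q\in L^1(\mathbb{R}_+)$ and $z\in\mathbb{C}_+^0$, the Jost solution $e_+(\cdot,z)$ is the unique solution of $-y''+q(x)y=z^2y$ on $\mathbb{R}_+$ with $e_+(x,z)=e^{ixz}(1+o(1))$ as $x\to\infty$ (equivalently, the solution of the integral equation $e_+(x,z)=e^{ixz}+\int_x^\infty\frac{\sin((t-x)z)}{z}q(t)e_+(t,z)\,dt$). *)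

theory Defs
  imports "HOL-Analysis.Analysis"
begin

text \<open>Here R_+ is read as the closed half-line [0, infinity).\<close>

definition jost_kernel :: "complex \<Rightarrow> real \<Rightarrow> real \<Rightarrow> complex" where
  "jost_kernel z x t = sin ((complex_of_real t - complex_of_real x) * z) / z"

text \<open>e is the Jost solution of -y'' + q y = z^2 y on [0,infinity):
  the (unique) continuous solution of the integral equation
  e(x) = exp(i x z) + int_x^infinity sin((t-x)z)/z q(t) e(t) dt
  with e(x) = exp(i x z)(1 + o(1)) as x tends to infinity.\<close>
definition jost_solution :: "(real \<Rightarrow> complex) \<Rightarrow> complex \<Rightarrow> (real \<Rightarrow> complex) \<Rightarrow> bool" where
  "jost_solution q z e \<longleftrightarrow>
     continuous_on {0..} e \<and>
     (\<forall>x\<ge>0. (\<lambda>t. jost_kernel z x t * q t * e t) integrable_on {x..} \<and>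
             e x = exp (\<i> * complex_of_real x * z)
                   + integral {x..} (\<lambda>t. jost_kernel z x t * q t * e t)) \<and>
     ((\<lambda>x. exp (- \<i> * complex_of_real x * z) * e x) \<longlongrightarrow> 1) at_top"

definition ahat :: "(real \<Rightarrow> real) \<Rightarrow> real \<Rightarrow> real" where
  "ahat a x = x / a x"

end

theory Submission
  imports Defs
begin

text \<open>Put y(x) = exp(-ixz) e(x). The Jost integral equation becomes
  y(x) - 1 = \<integral> K(x,t) q(t) y(t) dt over [x, \<infinity>), with K(x,t) = (exp(2i(t - x)z) - 1)/(2iz).
  For Im z \<ge> 0 one has |K(x,t)| \<le> min(t - x, 1/|z|), and monotonicity of a and ahat a turns
  this into |K(x,t)| \<le> ahat a (1/|z|) a(t). Hence v = |y - 1| satisfies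
  v(x) \<le> \<integral> \<phi>(t) (1 + v(t)) dt over [x, \<infinity>) with \<phi> = ahat a (1/|z|) a |q|, and a Gronwall
  inequality for tail integrals gives 1 + v(x) \<le> exp (\<integral> \<phi>).

  The tails \<Phi>(t) and S(t) of \<phi> and \<phi> (1 + v) are only continuous, so the Gronwall inequality
  is proved without derivatives: across a piece of [x, \<infinity>) on which \<Phi> drops by \<delta>, 1 + S grows
  at most by the factor 1/(1 - \<delta>). Cutting [x, \<infinity>) into n such pieces with \<delta> = \<Phi>(x)/n gives
  1 + S(x) \<le> (1 - \<Phi>(x)/n) ^ (-n), which tends to exp \<Phi>(x).\<close>

section \<open>Tail integrals on half-lines\<close>

lemma integrable_on_Ici_subintervals:
  fixes f :: "real \<Rightarrow> 'a::euclidean_space"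
  assumes f: "f absolutely_integrable_on {x..}" and "x \<le> t"
  shows "f integrable_on {t..}" "f integrable_on {t..s}"
  using assms by (auto intro!: set_lebesgue_integral_eq_integral(1) set_integrable_subset[OF f])

lemma integral_Ici_split:
  fixes f :: "real \<Rightarrow> 'a::banach"
  assumes "f integrable_on {t..s}" "f integrable_on {s..}" "t \<le> s"
  shows "integral {t..} f = integral {t..s} f + integral {s..} f"
proof -
  have "(f has_integral (integral {t..s} f + integral {s..} f)) ({t..s} \<union> {s..})"
    using assms by (intro has_integral_Un) (auto simp: integrable_integral)
  moreover have "{t..s} \<union> {s..} = {t..}"
    using assms(3) by auto
  ultimately show ?thesis
    by (simp add: integral_unique)
qed

lemma integral_Ici_eq_diff:
  fixes f :: "real \<Rightarrow> 'a::euclidean_space"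
  assumes "f absolutely_integrable_on {x..}" "x \<le> t"
  shows "integral {t..} f = integral {x..} f - integral {x..t} f"
  using integral_Ici_split[of f x t] integrable_on_Ici_subintervals[OF assms(1)] assms(2) by simp

lemma continuous_on_integral_Ici:
  fixes f :: "real \<Rightarrow> 'a::euclidean_space"
  assumes f: "f absolutely_integrable_on {x..}"
  shows "continuous_on {x..} (\<lambda>t. integral {t..} f)"
proof -
  have "continuous (at t within {x..}) (\<lambda>t. integral {x..t} f)" if "x \<le> t" for t
  proof -
    have "continuous_on {x..t+1} (\<lambda>t. integral {x..t} f)"
      using integrable_on_Ici_subintervals[OF f] by (intro indefinite_integral_continuous_1) auto
    then have "continuous (at t within {x..t+1}) (\<lambda>t. integral {x..t} f)"
      by (rule continuous_on_eq_continuous_within[THEN iffD1, rule_format]) (use that in simp)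
    moreover have "at t within {x..t+1} = at t within {x..}"
      by (rule at_within_nhd[of _ "{..<t+1}"]) auto
    ultimately show ?thesis
      by simp
  qed
  then have "continuous_on {x..} (\<lambda>t. integral {x..t} f)"
    using continuous_on_eq_continuous_within by fastforce
  then have "continuous_on {x..} (\<lambda>t. integral {x..} f - integral {x..t} f)"
    by (intro continuous_intros)
  then show ?thesis
    by (rule continuous_on_eq) (simp add: integral_Ici_eq_diff[OF f, symmetric])
qed

lemma tendsto_integral_Ici_at_top:
  fixes f :: "real \<Rightarrow> 'a::euclidean_space"
  assumes f: "f absolutely_integrable_on {x..}"
  shows "((\<lambda>t. integral {t..} f) \<longlongrightarrow> 0) at_top"
proof -
  have "((\<lambda>t. set_lebesgue_integral lebesgue {x..t} f) \<longlongrightarrow> set_lebesgue_integral lebesgue {x..} f) at_top"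
    using f by (intro tendsto_set_lebesgue_integral_at_top) auto
  moreover have "\<forall>\<^sub>F t in at_top. set_lebesgue_integral lebesgue {x..t} f = integral {x..t} f"
    by (intro always_eventually allI set_lebesgue_integral_eq_integral(2) set_integrable_subset[OF f]) auto
  ultimately have "((\<lambda>t. integral {x..t} f) \<longlongrightarrow> integral {x..} f) at_top"
    unfolding set_lebesgue_integral_eq_integral(2)[OF f] by (rule Lim_transform_eventually)
  then have "((\<lambda>t. integral {x..} f - integral {x..t} f) \<longlongrightarrow> 0) at_top"
    using tendsto_diff[OF tendsto_const[of "integral {x..} f"]] by fastforce
  moreover have "\<forall>\<^sub>F t in at_top. integral {x..} f - integral {x..t} f = integral {t..} f"
    by (intro eventually_at_top_linorderI[of x]) (simp add: integral_Ici_eq_diff[OF f, symmetric])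
  ultimately show ?thesis
    by (rule Lim_transform_eventually)
qed

lemma tendsto_at_top_imp_bounded_image_Ici:
  fixes f :: "real \<Rightarrow> 'a::metric_space"
  assumes "continuous_on {x..} f" "(f \<longlongrightarrow> l) at_top"
  shows "bounded (f ` {x..})"
proof -
  obtain B where B: "\<And>t. B \<le> t \<Longrightarrow> dist (f t) l < 1"
    using tendstoD[OF assms(2), of 1] by (auto simp: eventually_at_top_linorder)
  have "bounded (f ` {x..max x B})"
    by (intro compact_imp_bounded compact_continuous_image continuous_on_subset[OF assms(1)]) auto
  moreover have "f t \<in> f ` {x..max x B} \<union> ball l 1" if "x \<le> t" for t
    using B[of t] that by (cases "B \<le> t") (auto simp: dist_commute le_max_iff_disj)
  then have "f ` {x..} \<subseteq> f ` {x..max x B} \<union> ball l 1"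
    by blast
  ultimately show ?thesis
    by (meson bounded_Un bounded_ball bounded_subset)
qed

section \<open>A Gronwall inequality for tail integrals\<close>

lemma tail_gronwall_power_bound:
  fixes S \<Phi> :: "real \<Rightarrow> real"
  assumes S_nonneg: "\<And>t. x \<le> t \<Longrightarrow> 0 \<le> S t"
    and \<Phi>_cont: "continuous_on {x..} \<Phi>"
    and \<Phi>_tendsto: "(\<Phi> \<longlongrightarrow> 0) at_top"
    and S_step: "\<And>t s. x \<le> t \<Longrightarrow> t \<le> s \<Longrightarrow> S t - S s \<le> (1 + S t) * (\<Phi> t - \<Phi> s)"
    and S_tail: "\<And>t. x \<le> t \<Longrightarrow> S t \<le> (1 + S t) * \<Phi> t"
    and \<delta>: "0 \<le> \<delta>" "\<delta> \<le> 1"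
  shows "x \<le> t \<Longrightarrow> \<Phi> t \<le> real k * \<delta> \<Longrightarrow> (1 + S t) * (1 - \<delta>) ^ k \<le> 1"
proof (induction k arbitrary: t)
  case 0
  have "(1 + S t) * \<Phi> t \<le> 0"
    using 0 S_nonneg[of t] by (intro mult_nonneg_nonpos) auto
  then show ?case
    using S_tail[of t] 0 by simp
next
  case (Suc k)
  show ?case
  proof (cases "\<Phi> t \<le> real k * \<delta>")
    case True
    have "(1 + S t) * (1 - \<delta>) ^ Suc k \<le> (1 + S t) * (1 - \<delta>) ^ k"
      using \<delta> S_nonneg[OF Suc.prems(1)] by (intro mult_left_mono power_decreasing) auto
    then show ?thesis
      using Suc.IH[OF Suc.prems(1) True] by linarith
  next
    case False
    have one_step: "(1 + S t) * (1 - \<delta>) \<le> 1 + S'" if "S t - S' \<le> (1 + S t) * (\<Phi> t - \<Phi>')"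
      and "\<Phi> t - \<Phi>' \<le> \<delta>" for S' \<Phi>'
    proof -
      have "(1 + S t) * (\<Phi> t - \<Phi>') \<le> (1 + S t) * \<delta>"
        using that(2) S_nonneg[OF Suc.prems(1)] by (intro mult_left_mono) auto
      then show ?thesis
        using that(1) by (simp add: algebra_simps)
    qed
    show ?thesis
    proof (cases "k = 0")
      case True
      then show ?thesis
        using one_step[of 0 0] S_tail[OF Suc.prems(1)] Suc.prems(2) by simp
    next
      case k: False
      have "0 < real k * \<delta>"
        using False Suc.prems(2) k \<delta>(1) by (auto simp: algebra_simps)
      then have "\<forall>\<^sub>F b in at_top. \<Phi> b < real k * \<delta> \<and> t \<le> b"
        by (intro eventually_conj order_tendstoD(2)[OF \<Phi>_tendsto] eventually_ge_at_top)
      then obtain b where b: "\<Phi> b < real k * \<delta>" "t \<le> b"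
        unfolding eventually_at_top_linorder by auto
      moreover have "continuous_on {t..b} \<Phi>"
        by (rule continuous_on_subset[OF \<Phi>_cont]) (use Suc.prems(1) in auto)
      ultimately obtain s where s: "t \<le> s" "\<Phi> s = real k * \<delta>"
        using IVT2'[of \<Phi> b "real k * \<delta>" t] False by auto
      have "(1 + S t) * (1 - \<delta>) ^ Suc k = ((1 + S t) * (1 - \<delta>)) * (1 - \<delta>) ^ k"
        by (simp add: mult.assoc)
      also have "\<dots> \<le> (1 + S s) * (1 - \<delta>) ^ k"
      proof (intro mult_right_mono one_step)
        show "\<Phi> t - \<Phi> s \<le> \<delta>"
          using s(2) Suc.prems(2) by (simp add: algebra_simps)
      qed (use \<delta> S_step[OF Suc.prems(1) s(1)] in simp_all)
      also have "\<dots> \<le> 1"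
        using Suc.IH[of s] Suc.prems(1) s by simp
      finally show ?thesis .
    qed
  qed
qed

lemma tail_gronwall_exp_bound:
  fixes S \<Phi> :: "real \<Rightarrow> real"
  assumes S_nonneg: "\<And>t. x \<le> t \<Longrightarrow> 0 \<le> S t"
    and \<Phi>_cont: "continuous_on {x..} \<Phi>"
    and \<Phi>_tendsto: "(\<Phi> \<longlongrightarrow> 0) at_top"
    and S_step: "\<And>t s. x \<le> t \<Longrightarrow> t \<le> s \<Longrightarrow> S t - S s \<le> (1 + S t) * (\<Phi> t - \<Phi> s)"
    and S_tail: "\<And>t. x \<le> t \<Longrightarrow> S t \<le> (1 + S t) * \<Phi> t"
  shows "1 + S x \<le> exp (\<Phi> x)"
proof -
  have "0 \<le> (1 + S x) * \<Phi> x"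
    using S_tail[of x] S_nonneg[of x] by simp
  then have \<Phi>_nonneg: "0 \<le> \<Phi> x"
    using S_nonneg[of x] by (simp add: zero_le_mult_iff)
  obtain N :: nat where N: "\<Phi> x \<le> real N"
    using real_arch_simple by blast
  have "(1 + S x) * (1 + - \<Phi> x / real n) ^ n \<le> 1" if n: "Suc N \<le> n" for n
  proof -
    have "0 \<le> \<Phi> x / real n" "\<Phi> x / real n \<le> 1" "\<Phi> x \<le> real n * (\<Phi> x / real n)"
      using n N \<Phi>_nonneg by (auto simp: field_simps)
    then show ?thesis
      using tail_gronwall_power_bound[OF assms, of "\<Phi> x / real n" x n] by simp
  qed
  moreover have "(\<lambda>n. (1 + S x) * (1 + - \<Phi> x / real n) ^ n) \<longlonglongrightarrow> (1 + S x) * exp (- \<Phi> x)"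
    by (intro tendsto_mult tendsto_const tendsto_exp_limit_sequentially)
  ultimately have "(1 + S x) * exp (- \<Phi> x) \<le> 1"
    by (intro LIMSEQ_le_const2) auto
  then show ?thesis
    by (simp add: exp_minus field_simps)
qed

lemma absolutely_integrable_on_Ici_weighted:
  fixes \<phi> v :: "real \<Rightarrow> real"
  assumes "\<phi> absolutely_integrable_on {x..}" "continuous_on {x..} v" "bounded (v ` {x..})"
  shows "(\<lambda>r. (1 + v r) * \<phi> r) absolutely_integrable_on {x..}"
proof (rule absolutely_integrable_bounded_measurable_product_real)
  show "(\<lambda>r. 1 + v r) \<in> borel_measurable (lebesgue_on {x..})"
    using assms(2) by (intro continuous_imp_measurable_on_sets_lebesgue continuous_intros) auto
  have "(\<lambda>r. 1 + v r) ` {x..} = (\<lambda>y. 1 + y) ` v ` {x..}"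
    by (simp add: image_image)
  then show "bounded ((\<lambda>r. 1 + v r) ` {x..})"
    using bounded_translation[OF assms(3)] by simp
qed (use assms in auto)

lemma tail_gronwall_integral:
  fixes \<phi> v :: "real \<Rightarrow> real"
  assumes \<phi>_nonneg: "\<And>t. x \<le> t \<Longrightarrow> 0 \<le> \<phi> t"
    and \<phi>_int: "\<phi> absolutely_integrable_on {x..}"
    and v_nonneg: "\<And>t. x \<le> t \<Longrightarrow> 0 \<le> v t"
    and v_cont: "continuous_on {x..} v"
    and v_bounded: "bounded (v ` {x..})"
    and v_le: "\<And>t. x \<le> t \<Longrightarrow> v t \<le> integral {t..} (\<lambda>r. (1 + v r) * \<phi> r)"
  shows "v x \<le> exp (integral {x..} \<phi>) - 1"
proof -
  define g where "g r = (1 + v r) * \<phi> r" for r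
  define S where "S t = integral {t..} g" for t
  define \<Phi> where "\<Phi> t = integral {t..} \<phi>" for t
  have g_int: "g absolutely_integrable_on {x..}"
    unfolding g_def using \<phi>_int v_cont v_bounded by (rule absolutely_integrable_on_Ici_weighted)
  have g_nonneg: "0 \<le> g r" if "x \<le> r" for r
    using \<phi>_nonneg[OF that] v_nonneg[OF that] by (simp add: g_def)
  have v_le_S: "v t \<le> S t" if "x \<le> t" for t
    using v_le[OF that] by (simp add: S_def g_def[abs_def])
  note \<phi>_sub = integrable_on_Ici_subintervals[OF \<phi>_int]
  note g_sub = integrable_on_Ici_subintervals[OF g_int]
  have S_split: "S t = integral {t..s} g + S s" and \<Phi>_split: "\<Phi> t = integral {t..s} \<phi> + \<Phi> s"
    if "x \<le> t" "t \<le> s" for t s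
    using that unfolding S_def \<Phi>_def by (auto intro!: integral_Ici_split \<phi>_sub g_sub)
  have S_nonneg: "0 \<le> S t" if "x \<le> t" for t
    unfolding S_def using that by (intro integral_nonneg g_sub) (auto intro: g_nonneg)
  have g_le: "g r \<le> (1 + S t) * \<phi> r" if "x \<le> t" "t \<le> r" for t r
  proof -
    have "integral {t..r} g \<ge> 0"
      using that by (intro integral_nonneg g_sub) (auto intro: g_nonneg)
    then have "v r \<le> S t"
      using v_le_S[of r] S_split[OF that] that by simp
    then show ?thesis
      unfolding g_def using \<phi>_nonneg[of r] that by (simp add: mult_right_mono)
  qed
  have S_step: "S t - S s \<le> (1 + S t) * (\<Phi> t - \<Phi> s)" if "x \<le> t" "t \<le> s" for t s
  proof -
    have "integral {t..s} g \<le> integral {t..s} (\<lambda>r. (1 + S t) * \<phi> r)"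
      using that by (intro integral_le g_sub integrable_on_mult_right \<phi>_sub) (auto intro: g_le)
    then show ?thesis
      using S_split[OF that] \<Phi>_split[OF that] by simp
  qed
  have S_tail: "S t \<le> (1 + S t) * \<Phi> t" if "x \<le> t" for t
  proof -
    have "integral {t..} g \<le> integral {t..} (\<lambda>r. (1 + S t) * \<phi> r)"
      using that by (intro integral_le g_sub integrable_on_mult_right \<phi>_sub) (auto intro: g_le)
    then show ?thesis
      by (simp add: S_def \<Phi>_def)
  qed
  have "1 + S x \<le> exp (\<Phi> x)"
  proof (rule tail_gronwall_exp_bound[OF S_nonneg _ _ S_step S_tail])
    show "continuous_on {x..} \<Phi>"
      unfolding \<Phi>_def[abs_def] by (rule continuous_on_integral_Ici[OF \<phi>_int])
    show "(\<Phi> \<longlongrightarrow> 0) at_top"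
      unfolding \<Phi>_def[abs_def] by (rule tendsto_integral_Ici_at_top[OF \<phi>_int])
  qed
  then show ?thesis
    using v_le_S[of x] by (simp add: \<Phi>_def)
qed

section \<open>The Jost solution\<close>

lemma norm_exp_minus_one_le:
  fixes \<zeta> :: complex
  assumes "Re \<zeta> \<le> 0"
  shows "cmod (exp \<zeta> - 1) \<le> cmod \<zeta>" "cmod (exp \<zeta> - 1) \<le> 2"
proof -
  have "cmod (exp \<zeta> - exp 0) \<le> 1 * cmod (\<zeta> - 0)"
  proof (rule field_differentiable_bound[where S="{s. Re s \<le> 0}" and f'=exp])
    show "convex {s. Re s \<le> 0}"
      by (rule convex_halfspace_Re_le)
    show "(exp has_field_derivative exp s) (at s within {s. Re s \<le> 0})" for s
      by (rule has_field_derivative_at_within[OF DERIV_exp])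
  qed (use assms in auto)
  then show "cmod (exp \<zeta> - 1) \<le> cmod \<zeta>"
    by simp
  have "cmod (exp \<zeta> - 1) \<le> cmod (exp \<zeta>) + 1"
    using norm_triangle_ineq4[of "exp \<zeta>" 1] by simp
  moreover have "cmod (exp \<zeta>) \<le> 1"
    using assms by simp
  ultimately show "cmod (exp \<zeta> - 1) \<le> 2"
    by linarith
qed

lemma jost_kernel_rescaled_eq:
  assumes "z \<noteq> 0"
  shows "exp (- \<i> * complex_of_real x * z) * jost_kernel z x t * exp (\<i> * complex_of_real t * z)
         = (exp (2 * \<i> * complex_of_real (t - x) * z) - 1) / (2 * \<i> * z)"
proof -
  define u where "u = exp (\<i> * complex_of_real (t - x) * z)"
  have "u \<noteq> 0"
    by (simp add: u_def)
  have "exp (2 * \<i> * complex_of_real (t - x) * z) = u * u"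
    unfolding u_def by (simp flip: exp_add add: algebra_simps)
  moreover have "exp (- \<i> * complex_of_real x * z) * exp (\<i> * complex_of_real t * z) = u"
    unfolding u_def by (simp flip: exp_add add: algebra_simps)
  moreover have "jost_kernel z x t = (u - inverse u) / (2 * \<i>) / z"
    unfolding jost_kernel_def sin_exp_eq u_def by (simp flip: of_real_diff add: exp_minus mult.assoc)
  ultimately show ?thesis
    using \<open>u \<noteq> 0\<close> assms by (simp add: field_simps)
qed

lemma norm_jost_kernel_rescaled_le:
  assumes z: "Im z \<ge> 0" "z \<noteq> 0" and "x \<le> t"
  shows "cmod (exp (- \<i> * complex_of_real x * z) * jost_kernel z x t * exp (\<i> * complex_of_real t * z))
         \<le> min (t - x) (1 / cmod z)"
proof -
  define \<zeta> where "\<zeta> = 2 * \<i> * complex_of_real (t - x) * z"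
  have "Re \<zeta> \<le> 0"
    using assms by (simp add: \<zeta>_def mult_nonneg_nonneg)
  moreover have "cmod \<zeta> = 2 * (t - x) * cmod z"
    using assms by (simp add: \<zeta>_def norm_mult del: of_real_diff)
  ultimately have "cmod (exp \<zeta> - 1) \<le> 2 * (t - x) * cmod z" "cmod (exp \<zeta> - 1) \<le> 2"
    using norm_exp_minus_one_le by metis+
  moreover have "0 < cmod z"
    using z by simp
  ultimately have "cmod (exp \<zeta> - 1) / (2 * cmod z) \<le> min (t - x) (1 / cmod z)"
    by (simp add: divide_le_eq mult.commute mult.left_commute)
  moreover have "cmod (exp (- \<i> * complex_of_real x * z) * jost_kernel z x t * exp (\<i> * complex_of_real t * z))
      = cmod (exp \<zeta> - 1) / (2 * cmod z)"
    unfolding jost_kernel_rescaled_eq[OF z(2)] \<zeta>_def[symmetric] by (simp add: norm_divide norm_mult)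
  ultimately show ?thesis
    by simp
qed

lemma min_le_ahat_mult:
  fixes a :: "real \<Rightarrow> real"
  assumes a_pos: "\<forall>t\<ge>0. a t > 0"
    and a_mono: "mono_on {0..} a"
    and ahat_mono: "mono_on {0..} (ahat a)"
    and "0 < c" "0 \<le> w" "w \<le> t"
  shows "min w c \<le> ahat a c * a t"
proof (cases "c \<le> t")
  case True
  then have "a c \<le> a t"
    using \<open>0 < c\<close> by (intro mono_onD[OF a_mono]) auto
  then have "c \<le> c / a c * a t"
    using a_pos \<open>0 < c\<close> by (simp add: field_simps)
  then show ?thesis
    by (simp add: ahat_def)
next
  case False
  then have "ahat a t \<le> ahat a c"
    using assms by (intro mono_onD[OF ahat_mono]) auto
  then have "t \<le> c / a c * a t"
    using a_pos assms by (simp add: ahat_def divide_le_eq)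
  then show ?thesis
    using assms by (simp add: ahat_def)
qed

lemma norm_jost_integrand_le:
  fixes a :: "real \<Rightarrow> real" and q e :: "real \<Rightarrow> complex"
  assumes a_pos: "\<forall>t\<ge>0. a t > 0"
    and a_mono: "mono_on {0..} a"
    and ahat_mono: "mono_on {0..} (ahat a)"
    and z: "Im z \<ge> 0" "z \<noteq> 0"
    and t: "0 \<le> t" "t \<le> r"
  shows "cmod (exp (- \<i> * complex_of_real t * z) * (jost_kernel z t r * q r * e r))
         \<le> (1 + cmod (exp (- \<i> * complex_of_real r * z) * e r - 1))
             * (ahat a (1 / cmod z) * (a r * cmod (q r)))"
proof -
  define y where "y = exp (- \<i> * complex_of_real r * z) * e r"
  define K where "K = exp (- \<i> * complex_of_real t * z) * jost_kernel z t r * exp (\<i> * complex_of_real r * z)"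
  have weight_nonneg: "0 \<le> ahat a (1 / cmod z) * a r"
    using a_pos[rule_format, of r] a_pos[rule_format, of "1 / cmod z"] t by (simp add: ahat_def)
  have "e r = exp (\<i> * complex_of_real r * z) * y"
    unfolding y_def by (simp add: mult.assoc[symmetric] flip: exp_add)
  then have "exp (- \<i> * complex_of_real t * z) * (jost_kernel z t r * q r * e r) = K * q r * y"
    unfolding K_def by (simp add: ac_simps)
  then have "cmod (exp (- \<i> * complex_of_real t * z) * (jost_kernel z t r * q r * e r))
      = cmod K * cmod (q r) * cmod y"
    by (simp only: norm_mult)
  also have "\<dots> \<le> (ahat a (1 / cmod z) * a r) * cmod (q r) * (1 + cmod (y - 1))"
  proof (intro mult_mono mult_right_mono)
    show "cmod K \<le> ahat a (1 / cmod z) * a r"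
      unfolding K_def
    proof (rule order_trans[OF norm_jost_kernel_rescaled_le[OF z t(2)]])
      show "min (r - t) (1 / cmod z) \<le> ahat a (1 / cmod z) * a r"
        using z t by (intro min_le_ahat_mult[OF a_pos a_mono ahat_mono]) auto
    qed
    show "cmod y \<le> 1 + cmod (y - 1)"
      using norm_triangle_ineq[of "y - 1" 1] by simp
  qed (use weight_nonneg in simp_all)
  finally show ?thesis
    by (simp add: y_def mult_ac)
qed

lemma norm_jost_rescaled_minus_one_le:
  fixes a :: "real \<Rightarrow> real" and q e :: "real \<Rightarrow> complex"
  assumes a_pos: "\<forall>t\<ge>0. a t > 0"
    and a_mono: "mono_on {0..} a"
    and ahat_mono: "mono_on {0..} (ahat a)"
    and z: "Im z \<ge> 0" "z \<noteq> 0"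
    and jost: "jost_solution q z e"
    and t: "0 \<le> t"
    and majorant_int: "(\<lambda>r. (1 + cmod (exp (- \<i> * complex_of_real r * z) * e r - 1))
                          * (ahat a (1 / cmod z) * (a r * cmod (q r)))) integrable_on {t..}"
  shows "cmod (exp (- \<i> * complex_of_real t * z) * e t - 1)
         \<le> integral {t..} (\<lambda>r. (1 + cmod (exp (- \<i> * complex_of_real r * z) * e r - 1))
                                * (ahat a (1 / cmod z) * (a r * cmod (q r))))"
proof -
  define F where "F r = jost_kernel z t r * q r * e r" for r
  have F_int: "F integrable_on {t..}" and e_t: "e t = exp (\<i> * complex_of_real t * z) + integral {t..} F"
    using jost t by (auto simp: jost_solution_def F_def[abs_def])
  have "exp (- \<i> * complex_of_real t * z) * e t - 1
      = integral {t..} (\<lambda>r. exp (- \<i> * complex_of_real t * z) * F r)"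
    unfolding e_t by (simp add: distrib_left flip: exp_add)
  also have "cmod \<dots> \<le> integral {t..} (\<lambda>r. (1 + cmod (exp (- \<i> * complex_of_real r * z) * e r - 1))
                                * (ahat a (1 / cmod z) * (a r * cmod (q r))))"
  proof (rule integral_norm_bound_integral[OF integrable_on_mult_right[OF F_int] majorant_int])
    show "cmod (exp (- \<i> * complex_of_real t * z) * F r)
        \<le> (1 + cmod (exp (- \<i> * complex_of_real r * z) * e r - 1))
            * (ahat a (1 / cmod z) * (a r * cmod (q r)))"
      if "r \<in> {t..}" for r
      unfolding F_def using norm_jost_integrand_le[OF a_pos a_mono ahat_mono z t, of r q e] that by simp
  qed
  finally show ?thesis .
qed

theorem proposition1p2:
  fixes a :: "real \<Rightarrow> real" and q e :: "real \<Rightarrow> complex" and z :: complex and x :: real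
  assumes a_pos: "\<forall>t\<ge>0. a t > 0"
    and a_locint: "\<forall>b\<ge>0. a integrable_on {0..b}"
    and a_mono: "mono_on {0..} a"
    and ahat_mono: "mono_on {0..} (ahat a)"
    and q_L1: "q absolutely_integrable_on {0..}"
    and z_in: "Im z \<ge> 0" "z \<noteq> 0"
    and jost: "jost_solution q z e"
    and x_nonneg: "x \<ge> 0"
    and finite_rhs: "(\<lambda>t. a t * cmod (q t)) integrable_on {x..}"
  shows "cmod (exp (- \<i> * complex_of_real x * z) * e x - 1)
           \<le> exp (ahat a (1 / cmod z) * integral {x..} (\<lambda>t. a t * cmod (q t))) - 1"
proof -
  define \<phi> where "\<phi> r = ahat a (1 / cmod z) * (a r * cmod (q r))" for r
  define v where "v t = cmod (exp (- \<i> * complex_of_real t * z) * e t - 1)" for t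
  have \<phi>_nonneg: "0 \<le> \<phi> r" if "x \<le> r" for r
    using a_pos[rule_format, of r] a_pos[rule_format, of "1 / cmod z"] x_nonneg that
    by (simp add: \<phi>_def ahat_def)
  have \<phi>_int: "\<phi> absolutely_integrable_on {x..}"
    using finite_rhs \<phi>_nonneg unfolding \<phi>_def[abs_def]
    by (intro nonnegative_absolutely_integrable_1 integrable_on_mult_right) auto
  have v_cont: "continuous_on {x..} v"
    using jost x_nonneg unfolding jost_solution_def v_def[abs_def]
    by (auto intro!: continuous_intros elim: continuous_on_subset)
  have "(v \<longlongrightarrow> cmod (1 - 1 :: complex)) at_top"
    using jost unfolding jost_solution_def v_def[abs_def] by (intro tendsto_intros) auto
  then have v_bounded: "bounded (v ` {x..})"
    using v_cont by (intro tendsto_at_top_imp_bounded_image_Ici)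
  note majorant_int = absolutely_integrable_on_Ici_weighted[OF \<phi>_int v_cont v_bounded]
  have "v x \<le> exp (integral {x..} \<phi>) - 1"
  proof (rule tail_gronwall_integral[OF \<phi>_nonneg \<phi>_int _ v_cont v_bounded])
    show "0 \<le> v t" for t
      by (simp add: v_def)
    show "v t \<le> integral {t..} (\<lambda>r. (1 + v r) * \<phi> r)" if "x \<le> t" for t
      using norm_jost_rescaled_minus_one_le[OF a_pos a_mono ahat_mono z_in jost]
        integrable_on_Ici_subintervals(1)[OF majorant_int that] x_nonneg that
      by (simp add: v_def \<phi>_def)
  qed
  then show ?thesis
    by (simp add: v_def \<phi>_def[abs_def])
qed

end
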